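(* Let $n\ge2$ and $\alpha^{(1)},\dots,\alpha^{(n-2)}\in\mathbb{R}$. The assignment $$h\mapsto qp,\quad x_-\mapsto-q^2/2,\quad x_+\mapsto p^2/2,\quad y_{i,-}\mapsto-\alpha^{(i)}q,\quad y_{i,+}\mapsto\alpha^{(i)}p,\quad z_{i,j}\mapsto\alpha^{(i)}\alpha^{(j)}$$ extends to a Poisson algebra homomorphism $D_n:S\mathfrak{g}_n\to C^\infty(\mathbb{R}^2)$ (one degree of freedom canonical symplectic realisation). Moreover, for $N\ge1$ and vectors $\boldsymbol\alpha^{(1)},\dots,\boldsymbol\alpha^{(n-2)}\in\mathbb{R}^N$, the assignment $$h\mapsto\mathbf q\cdot\mathbf p,\quad x_-\mapsto-\mathbf q^2/2,\quad x_+\mapsto\mathbf p^2/2,\quad y_{i,-}\mapsto-\boldsymbol\alpha^{(i)}\cdot\mathbf q,\quad y_{i,+}\mapsto\boldsymbol\alpha^{(i)}\cdot\mathbf p,\quad z_{i,j}\mapsto\boldsymbol\alpha^{(i)}\cdot\boldsymbol\alpha^{(j)}$$ extends to a Poisson algebra homomorphism $S\mathfrak{g}_n\to C^\infty(\mathbb{R}^{2N})$ (the $N$ degrees of freedom canonical realisation obtained as $D_n^{\otimes N}$ composed with the $N$-th primitive coproduct, the $i$-th site using the constants given by the $i$-th components of the $\boldsymbol\alpha^{(j)}$).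
   Context: For $n\ge2$, $\mathfrak{g}_n$ is the real Lie algebra with basis $h,x_-,x_+$, $y_{i,\pm}$ ($1\le i\le n-2$), $z_{i,j}$ ($1\le i\le j\le n-2$), whose nonzero brackets (up to antisymmetry) are $[x_+,x_-]=h$, $[h,x_\pm]=\pm2x_\pm$, $[h,y_{i,\pm}]=\pm y_{i,\pm}$, $[x_-,y_{i,+}]=y_{i,-}$, $[x_+,y_{i,-}]=y_{i,+}$, $[y_{i,+},y_{j,-}]=z_{\min(i,j),\max(i,j)}$; all other brackets vanish. $S\mathfrak{g}_n$ is the polynomial algebra in the basis elements with the Lie–Poisson bracket $\{f,g\}=\sum_{i,j,k}c_{ij}^kx_k\,\partial_{x_i}f\,\partial_{x_j}g$ extending the Lie bracket. $C^\infty(\mathbb{R}^{2N})$ with Darboux coordinates $\mathbf q=(q_1,\dots,q_N)$, $\mathbf p=(p_1,\dots,p_N)$ carries the canonical bracket $\{f,g\}=\sum_k(\partial_{q_k}f\,\partial_{p_k}g-\partial_{q_k}g\,\partial_{p_k}f)$; for $N=1$ write $(q,p)$. The primitive coproduct is $\Delta(x)=x\otimes1+1\otimes x$ on generators. *)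

theory Defs
  imports "HOL-Analysis.Analysis"
begin

datatype gen = H | Xm | Xp | Ym nat | Yp nat | Z nat nat

definition basis :: "nat \<Rightarrow> gen set" where
  "basis n = {H, Xm, Xp}
     \<union> {Ym i | i. 1 \<le> i \<and> i \<le> n - 2}
     \<union> {Yp i | i. 1 \<le> i \<and> i \<le> n - 2}
     \<union> {Z i j | i j. 1 \<le> i \<and> i \<le> j \<and> j \<le> n - 2}"

definition unitv :: "gen \<Rightarrow> gen \<Rightarrow> real" where
  "unitv c = (\<lambda>d. if d = c then 1 else 0)"

text \<open>Lie bracket of basis elements, as coefficient vector: lie a b c = c_{ab}^c.\<close>
fun lie :: "gen \<Rightarrow> gen \<Rightarrow> gen \<Rightarrow> real" where
  "lie Xp Xm = unitv H"
| "lie Xm Xp = (\<lambda>d. - unitv H d)"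
| "lie H Xp = (\<lambda>d. 2 * unitv Xp d)"
| "lie Xp H = (\<lambda>d. - 2 * unitv Xp d)"
| "lie H Xm = (\<lambda>d. - 2 * unitv Xm d)"
| "lie Xm H = (\<lambda>d. 2 * unitv Xm d)"
| "lie H (Yp i) = unitv (Yp i)"
| "lie (Yp i) H = (\<lambda>d. - unitv (Yp i) d)"
| "lie H (Ym i) = (\<lambda>d. - unitv (Ym i) d)"
| "lie (Ym i) H = unitv (Ym i)"
| "lie Xm (Yp i) = unitv (Ym i)"
| "lie (Yp i) Xm = (\<lambda>d. - unitv (Ym i) d)"
| "lie Xp (Ym i) = unitv (Yp i)"
| "lie (Ym i) Xp = (\<lambda>d. - unitv (Yp i) d)"
| "lie (Yp i) (Ym j) = unitv (Z (min i j) (max i j))"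
| "lie (Ym j) (Yp i) = (\<lambda>d. - unitv (Z (min i j) (max i j)) d)"
| "lie _ _ = (\<lambda>d. 0)"

text \<open>S g_n (over the reals) is realised as the algebra of polynomial functions on the dual
  g_n^*, a point of which is given by its values xi b on the basis elements b.\<close>
inductive_set polyfun :: "nat \<Rightarrow> ((gen \<Rightarrow> real) \<Rightarrow> real) set" for n :: nat where
  const: "(\<lambda>_. c) \<in> polyfun n"
| coord: "b \<in> basis n \<Longrightarrow> (\<lambda>\<xi>. \<xi> b) \<in> polyfun n"
| add: "f \<in> polyfun n \<Longrightarrow> g \<in> polyfun n \<Longrightarrow> (\<lambda>\<xi>. f \<xi> + g \<xi>) \<in> polyfun n"
| mult: "f \<in> polyfun n \<Longrightarrow> g \<in> polyfun n \<Longrightarrow> (\<lambda>\<xi>. f \<xi> * g \<xi>) \<in> polyfun n"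

definition gpartial :: "gen \<Rightarrow> ((gen \<Rightarrow> real) \<Rightarrow> real) \<Rightarrow> (gen \<Rightarrow> real) \<Rightarrow> real" where
  "gpartial b f \<xi> = deriv (\<lambda>t. f (\<xi>(b := t))) (\<xi> b)"

definition LP_bracket :: "nat \<Rightarrow> ((gen \<Rightarrow> real) \<Rightarrow> real) \<Rightarrow> ((gen \<Rightarrow> real) \<Rightarrow> real)
    \<Rightarrow> (gen \<Rightarrow> real) \<Rightarrow> real" where
  "LP_bracket n f g \<xi> =
     (\<Sum>a\<in>basis n. \<Sum>b\<in>basis n. \<Sum>c\<in>basis n.
        lie a b c * \<xi> c * gpartial a f \<xi> * gpartial b g \<xi>)"

fun diff_k :: "nat \<Rightarrow> ('a::real_normed_vector \<Rightarrow> real) \<Rightarrow> bool" where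
  "diff_k 0 f = True"
| "diff_k (Suc k) f = ((\<forall>x. f differentiable (at x)) \<and>
      (\<forall>v. diff_k k (\<lambda>x. frechet_derivative f (at x) v)))"

definition C_inf :: "('a::real_normed_vector \<Rightarrow> real) \<Rightarrow> bool" where
  "C_inf f \<longleftrightarrow> (\<forall>k. diff_k k f)"

definition can_bracket1 :: "(real \<times> real \<Rightarrow> real) \<Rightarrow> (real \<times> real \<Rightarrow> real) \<Rightarrow> real \<times> real \<Rightarrow> real" where
  "can_bracket1 f g = (\<lambda>(q, p).
      deriv (\<lambda>t. f (t, p)) q * deriv (\<lambda>t. g (q, t)) p
    - deriv (\<lambda>t. g (t, p)) q * deriv (\<lambda>t. f (q, t)) p)"

definition vupd :: "real ^ 'N \<Rightarrow> 'N \<Rightarrow> real \<Rightarrow> real ^ 'N" where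
  "vupd v k t = (\<chi> j. if j = k then t else v $ j)"

definition can_bracketN :: "((real ^ 'N) \<times> (real ^ 'N) \<Rightarrow> real) \<Rightarrow> ((real ^ 'N) \<times> (real ^ 'N) \<Rightarrow> real)
    \<Rightarrow> (real ^ 'N) \<times> (real ^ 'N) \<Rightarrow> real" where
  "can_bracketN f g = (\<lambda>(q, p). \<Sum>k\<in>UNIV.
      deriv (\<lambda>t. f (vupd q k t, p)) (q $ k) * deriv (\<lambda>t. g (q, vupd p k t)) (p $ k)
    - deriv (\<lambda>t. g (vupd q k t, p)) (q $ k) * deriv (\<lambda>t. f (q, vupd p k t)) (p $ k))"

definition LP_poisson_hom :: "nat \<Rightarrow> (('b::euclidean_space \<Rightarrow> real) \<Rightarrow> ('b \<Rightarrow> real) \<Rightarrow> 'b \<Rightarrow> real)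
    \<Rightarrow> (gen \<Rightarrow> 'b \<Rightarrow> real) \<Rightarrow> (((gen \<Rightarrow> real) \<Rightarrow> real) \<Rightarrow> 'b \<Rightarrow> real) \<Rightarrow> bool" where
  "LP_poisson_hom n br \<phi> D \<longleftrightarrow>
     (\<forall>f\<in>polyfun n. C_inf (D f)) \<and>
     (\<forall>c. D (\<lambda>_. c) = (\<lambda>_. c)) \<and>
     (\<forall>f\<in>polyfun n. \<forall>g\<in>polyfun n. D (\<lambda>\<xi>. f \<xi> + g \<xi>) = (\<lambda>x. D f x + D g x)) \<and>
     (\<forall>f\<in>polyfun n. \<forall>g\<in>polyfun n. D (\<lambda>\<xi>. f \<xi> * g \<xi>) = (\<lambda>x. D f x * D g x)) \<and>
     (\<forall>b\<in>basis n. D (\<lambda>\<xi>. \<xi> b) = \<phi> b) \<and>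
     (\<forall>f\<in>polyfun n. \<forall>g\<in>polyfun n. D (LP_bracket n f g) = br (D f) (D g))"

fun real1 :: "(nat \<Rightarrow> real) \<Rightarrow> gen \<Rightarrow> real \<times> real \<Rightarrow> real" where
  "real1 \<alpha> H = (\<lambda>(q, p). q * p)"
| "real1 \<alpha> Xm = (\<lambda>(q, p). - (q ^ 2) / 2)"
| "real1 \<alpha> Xp = (\<lambda>(q, p). p ^ 2 / 2)"
| "real1 \<alpha> (Ym i) = (\<lambda>(q, p). - (\<alpha> i * q))"
| "real1 \<alpha> (Yp i) = (\<lambda>(q, p). \<alpha> i * p)"
| "real1 \<alpha> (Z i j) = (\<lambda>_. \<alpha> i * \<alpha> j)"

fun realN :: "(nat \<Rightarrow> real ^ 'N) \<Rightarrow> gen \<Rightarrow> (real ^ 'N) \<times> (real ^ 'N) \<Rightarrow> real" where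
  "realN \<alpha> H = (\<lambda>(q, p). q \<bullet> p)"
| "realN \<alpha> Xm = (\<lambda>(q, p). - (q \<bullet> q) / 2)"
| "realN \<alpha> Xp = (\<lambda>(q, p). (p \<bullet> p) / 2)"
| "realN \<alpha> (Ym i) = (\<lambda>(q, p). - (\<alpha> i \<bullet> q))"
| "realN \<alpha> (Yp i) = (\<lambda>(q, p). \<alpha> i \<bullet> p)"
| "realN \<alpha> (Z i j) = (\<lambda>_. \<alpha> i \<bullet> \<alpha> j)"

end

theory Submission
  imports Defs
begin

text \<open>Both realisations are pullbacks \<open>f \<mapsto> f \<circ> \<Phi>\<close> along the moment map
  \<open>\<Phi> x = (b \<mapsto> \<phi> b x)\<close> from phase space to \<open>g\<^sub>n\<^sup>*\<close>, where \<open>\<phi>\<close> is the given assignment on the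
  basis. A pullback is an algebra homomorphism, and it is smooth because polynomials in smooth
  functions are smooth. By the chain rule, the canonical bracket of two pullbacks is
  \<open>\<Sum>\<^sub>a\<^sub>,\<^sub>b \<partial>\<^sub>af \<partial>\<^sub>bg {\<phi>\<^sub>a, \<phi>\<^sub>b}\<close>, while the pullback of their Lie--Poisson bracket is
  \<open>\<Sum>\<^sub>a\<^sub>,\<^sub>b \<partial>\<^sub>af \<partial>\<^sub>bg \<Sum>\<^sub>c c\<^sub>a\<^sub>b\<^sup>c \<phi>\<^sub>c\<close>. So it is enough that the images of the generators satisfy
  the commutation relations \<open>{\<phi>\<^sub>a, \<phi>\<^sub>b} = \<Sum>\<^sub>c c\<^sub>a\<^sub>b\<^sup>c \<phi>\<^sub>c\<close>. For one degree of freedom,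
  this is a finite check. For \<open>N\<close> degrees of freedom, each \<open>\<phi>\<^sub>b\<close> is a sum of one-site
  realisations. Functions at different sites Poisson-commute, so the relations follow
  site by site.\<close>

lemma frechet_derivative_add_at:
  fixes f g :: "'a::real_normed_vector \<Rightarrow> 'b::real_normed_vector"
  assumes "f differentiable at x" "g differentiable at x"
  shows "frechet_derivative (\<lambda>x. f x + g x) (at x)
       = (\<lambda>v. frechet_derivative f (at x) v + frechet_derivative g (at x) v)"
proof -
  have "((\<lambda>x. f x + g x) has_derivative
      (\<lambda>v. frechet_derivative f (at x) v + frechet_derivative g (at x) v)) (at x)"
    using assms by (intro has_derivative_add) (simp_all add: frechet_derivative_works[symmetric])
  then show ?thesis by (rule frechet_derivative_at[symmetric])
qed

lemma frechet_derivative_mult_at: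
  fixes f g :: "'a::real_normed_vector \<Rightarrow> 'b::real_normed_algebra"
  assumes "f differentiable at x" "g differentiable at x"
  shows "frechet_derivative (\<lambda>x. f x * g x) (at x)
       = (\<lambda>v. f x * frechet_derivative g (at x) v + frechet_derivative f (at x) v * g x)"
proof -
  have "((\<lambda>x. f x * g x) has_derivative
      (\<lambda>v. f x * frechet_derivative g (at x) v + frechet_derivative f (at x) v * g x)) (at x)"
    using assms by (intro has_derivative_mult) (simp_all add: frechet_derivative_works[symmetric])
  then show ?thesis by (rule frechet_derivative_at[symmetric])
qed

lemma diff_k_const: "diff_k k (\<lambda>x::'a::real_normed_vector. c)"
  by (induction k arbitrary: c) auto

lemma diff_k_Suc_imp_diff_k: "diff_k (Suc k) f \<Longrightarrow> diff_k k f"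
  by (induction k arbitrary: f) auto

lemma diff_k_add:
  fixes f g :: "'a::real_normed_vector \<Rightarrow> real"
  assumes "diff_k k f" "diff_k k g"
  shows "diff_k k (\<lambda>x. f x + g x)"
  using assms
proof (induction k arbitrary: f g)
  case (Suc k)
  have "diff_k k (\<lambda>x. frechet_derivative (\<lambda>x. f x + g x) (at x) v)" for v
    using Suc by (simp add: frechet_derivative_add_at)
  moreover have "(\<lambda>x. f x + g x) differentiable at x" for x
    using Suc.prems by (intro differentiable_add) simp_all
  ultimately show ?case by (simp only: diff_k.simps) blast
qed simp

lemma diff_k_mult:
  fixes f g :: "'a::real_normed_vector \<Rightarrow> real"
  assumes "diff_k k f" "diff_k k g"
  shows "diff_k k (\<lambda>x. f x * g x)"
  using assms
proof (induction k arbitrary: f g)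
  case (Suc k)
  note diff_k_f_g = Suc.prems[THEN diff_k_Suc_imp_diff_k]
  have "diff_k k (\<lambda>x. frechet_derivative (\<lambda>x. f x * g x) (at x) v)" for v
  proof -
    have "f differentiable at x" "g differentiable at x" for x
      using Suc.prems by simp_all
    then have "frechet_derivative (\<lambda>x. f x * g x) (at x) v
        = f x * frechet_derivative g (at x) v + frechet_derivative f (at x) v * g x" for x
      by (simp add: frechet_derivative_mult_at)
    moreover have "diff_k k (\<lambda>x. f x * frechet_derivative g (at x) v + frechet_derivative f (at x) v * g x)"
      using Suc diff_k_f_g by (intro diff_k_add) simp_all
    ultimately show ?thesis by simp
  qed
  moreover have "(\<lambda>x. f x * g x) differentiable at x" for x
    using Suc.prems by (intro differentiable_mult) simp_all
  ultimately show ?case by (simp only: diff_k.simps) blast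
qed simp

lemma diff_k_bounded_linear: "bounded_linear (l::'a::real_normed_vector \<Rightarrow> real) \<Longrightarrow> diff_k k l"
  by (cases k) (simp_all add: frechet_derivative_at[OF bounded_linear_imp_has_derivative, symmetric]
      bounded_linear_imp_differentiable diff_k_const)

lemma C_inf_const: "C_inf (\<lambda>x::'a::real_normed_vector. c)"
  by (simp add: C_inf_def diff_k_const)

lemma C_inf_add: "C_inf f \<Longrightarrow> C_inf g \<Longrightarrow> C_inf (\<lambda>x. f x + g x)"
  by (simp add: C_inf_def diff_k_add)

lemma C_inf_mult: "C_inf f \<Longrightarrow> C_inf g \<Longrightarrow> C_inf (\<lambda>x. f x * g x)"
  by (simp add: C_inf_def diff_k_mult)

lemma C_inf_uminus: "C_inf f \<Longrightarrow> C_inf (\<lambda>x. - f x)"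
  using C_inf_mult[OF C_inf_const, of f "- 1"] by simp

lemma C_inf_divide_const: "C_inf f \<Longrightarrow> C_inf (\<lambda>x. f x / c)"
  using C_inf_mult[OF _ C_inf_const, of f "1 / c"] by simp

lemma C_inf_bounded_linear: "bounded_linear l \<Longrightarrow> C_inf l"
  by (simp add: C_inf_def diff_k_bounded_linear)

lemma C_inf_sum: "(\<And>k. k \<in> K \<Longrightarrow> C_inf (f k)) \<Longrightarrow> C_inf (\<lambda>x. \<Sum>k\<in>K. f k x)"
  by (induction K rule: infinite_finite_induct) (auto intro: C_inf_const C_inf_add)

lemma finite_basis: "finite (basis n)"
proof -
  have "basis n \<subseteq> {H, Xm, Xp} \<union> Ym ` {1..n-2} \<union> Yp ` {1..n-2} \<union> case_prod Z ` ({1..n-2} \<times> {1..n-2})"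
    unfolding basis_def by auto
  then show ?thesis by (rule finite_subset) auto
qed

lemma has_gpartial:
  "(\<lambda>t. f (\<xi>(a := t))) differentiable at (\<xi> a) \<Longrightarrow>
    ((\<lambda>t. f (\<xi>(a := t))) has_real_derivative gpartial a f \<xi>) (at (\<xi> a))"
  by (simp add: gpartial_def DERIV_deriv_iff_real_differentiable)

lemma gpartial_add:
  assumes "(\<lambda>t. f (\<xi>(a := t))) differentiable at (\<xi> a)" "(\<lambda>t. g (\<xi>(a := t))) differentiable at (\<xi> a)"
  shows "gpartial a (\<lambda>\<xi>. f \<xi> + g \<xi>) \<xi> = gpartial a f \<xi> + gpartial a g \<xi>"
  using DERIV_add[OF assms[THEN has_gpartial]] unfolding gpartial_def[of a "\<lambda>\<xi>. f \<xi> + g \<xi>"]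
  by (rule DERIV_imp_deriv)

lemma gpartial_mult:
  assumes "(\<lambda>t. f (\<xi>(a := t))) differentiable at (\<xi> a)" "(\<lambda>t. g (\<xi>(a := t))) differentiable at (\<xi> a)"
  shows "gpartial a (\<lambda>\<xi>. f \<xi> * g \<xi>) \<xi> = gpartial a f \<xi> * g \<xi> + f \<xi> * gpartial a g \<xi>"
proof -
  have "((\<lambda>t. f (\<xi>(a := t)) * g (\<xi>(a := t))) has_real_derivative
      gpartial a f \<xi> * g \<xi> + gpartial a g \<xi> * f \<xi>) (at (\<xi> a))"
    using DERIV_mult[OF assms[THEN has_gpartial]] by (simp only: fun_upd_triv)
  then show ?thesis
    unfolding gpartial_def[of a "\<lambda>\<xi>. f \<xi> * g \<xi>"] by (simp add: DERIV_imp_deriv)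
qed

lemma partial_differentiable_if_chain_rule:
  assumes chain: "\<And>\<gamma> \<gamma>' t\<^sub>0.
      (\<And>b. b \<in> B \<Longrightarrow> ((\<lambda>t. \<gamma> t b) has_real_derivative \<gamma>' b) (at t\<^sub>0)) \<Longrightarrow>
      ((\<lambda>t. f (\<gamma> t)) has_real_derivative (\<Sum>a\<in>B. gpartial a f (\<gamma> t\<^sub>0) * \<gamma>' a)) (at t\<^sub>0)"
  shows "(\<lambda>t. f (\<xi>(a := t))) differentiable at (\<xi> a)"
proof -
  have "((\<lambda>t. (\<xi>(a := t)) b) has_real_derivative (if b = a then 1 else 0)) (at (\<xi> a))" for b
    by (cases "b = a") (auto intro!: derivative_eq_intros)
  then show ?thesis
    using chain[of "\<lambda>t. \<xi>(a := t)" "\<lambda>b. if b = a then 1 else 0" "\<xi> a"]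
    by (auto simp: real_differentiable_def)
qed

lemma polyfun_chain_rule:
  assumes "f \<in> polyfun n"
    and "\<And>b. b \<in> basis n \<Longrightarrow> ((\<lambda>t. \<gamma> t b) has_real_derivative \<gamma>' b) (at t\<^sub>0)"
  shows "((\<lambda>t. f (\<gamma> t)) has_real_derivative (\<Sum>a\<in>basis n. gpartial a f (\<gamma> t\<^sub>0) * \<gamma>' a)) (at t\<^sub>0)"
  using assms
proof (induction arbitrary: \<gamma> \<gamma>' t\<^sub>0)
  case (const c)
  then show ?case by (simp add: gpartial_def)
next
  case (coord b)
  have "gpartial a (\<lambda>\<xi>. \<xi> b) \<xi> * x = (if a = b then x else 0)" for a \<xi> x
    by (simp add: gpartial_def)
  with coord show ?case by (simp add: finite_basis)
next
  case (add f g \<gamma> \<gamma>' t\<^sub>0)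
  have "gpartial a (\<lambda>\<xi>. f \<xi> + g \<xi>) \<xi> = gpartial a f \<xi> + gpartial a g \<xi>" for a \<xi>
    using add.IH[THEN partial_differentiable_if_chain_rule] by (rule gpartial_add)
  with DERIV_add[OF add.IH[of \<gamma> \<gamma>' t\<^sub>0, OF add.prems]] show ?case
    by (simp add: distrib_right sum.distrib)
next
  case (mult f g \<gamma> \<gamma>' t\<^sub>0)
  have "gpartial a (\<lambda>\<xi>. f \<xi> * g \<xi>) \<xi> = gpartial a f \<xi> * g \<xi> + f \<xi> * gpartial a g \<xi>" for a \<xi>
    using mult.IH[THEN partial_differentiable_if_chain_rule] by (rule gpartial_mult)
  with DERIV_mult[OF mult.IH[of \<gamma> \<gamma>' t\<^sub>0, OF mult.prems]] show ?case
    by (simp add: algebra_simps sum.distrib sum_distrib_left sum_distrib_right)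
qed

definition pullback :: "(gen \<Rightarrow> 'b \<Rightarrow> real) \<Rightarrow> ((gen \<Rightarrow> real) \<Rightarrow> real) \<Rightarrow> 'b \<Rightarrow> real" where
  "pullback \<phi> f x = f (\<lambda>b. \<phi> b x)"

lemma C_inf_pullback:
  assumes "f \<in> polyfun n" "\<And>b. b \<in> basis n \<Longrightarrow> C_inf (\<phi> b)"
  shows "C_inf (pullback \<phi> f)"
  using assms unfolding pullback_def by induction (simp_all add: C_inf_const C_inf_add C_inf_mult)

lemma deriv_pullback:
  assumes "f \<in> polyfun n" "\<And>b. b \<in> basis n \<Longrightarrow> (\<lambda>t. \<phi> b (c t)) differentiable at t\<^sub>0"
  shows "deriv (\<lambda>t. pullback \<phi> f (c t)) t\<^sub>0
       = (\<Sum>a\<in>basis n. gpartial a f (\<lambda>b. \<phi> b (c t\<^sub>0)) * deriv (\<lambda>t. \<phi> a (c t)) t\<^sub>0)"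
  unfolding pullback_def
  using assms by (intro DERIV_imp_deriv polyfun_chain_rule)
    (simp_all add: DERIV_deriv_iff_real_differentiable)

lemma LP_poisson_hom_pullback:
  fixes \<phi> :: "gen \<Rightarrow> 'b::euclidean_space \<Rightarrow> real"
  assumes smooth: "\<And>b. b \<in> basis n \<Longrightarrow> C_inf (\<phi> b)"
    and leibniz: "\<And>f g x. f \<in> polyfun n \<Longrightarrow> g \<in> polyfun n \<Longrightarrow>
      br (pullback \<phi> f) (pullback \<phi> g) x
        = (\<Sum>a\<in>basis n. \<Sum>b\<in>basis n.
             gpartial a f (\<lambda>c. \<phi> c x) * gpartial b g (\<lambda>c. \<phi> c x) * br (\<phi> a) (\<phi> b) x)"
    and relations: "\<And>a b x. a \<in> basis n \<Longrightarrow> b \<in> basis n \<Longrightarrow>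
      br (\<phi> a) (\<phi> b) x = (\<Sum>c\<in>basis n. lie a b c * \<phi> c x)"
  shows "LP_poisson_hom n br \<phi> (pullback \<phi>)"
  unfolding LP_poisson_hom_def
proof (intro conjI ballI allI)
  fix f g assume "f \<in> polyfun n" "g \<in> polyfun n"
  then show "pullback \<phi> (LP_bracket n f g) = br (pullback \<phi> f) (pullback \<phi> g)"
    by (auto simp: fun_eq_iff leibniz relations pullback_def LP_bracket_def
        sum_distrib_left sum_distrib_right mult_ac intro!: sum.cong)
qed (auto simp: pullback_def fun_eq_iff intro: C_inf_pullback smooth)

lemma sum_product_antisym:
  fixes A B u v :: "'a \<Rightarrow> real"
  shows "(\<Sum>a\<in>S. A a * u a) * (\<Sum>b\<in>S. B b * v b) - (\<Sum>b\<in>S. B b * u b) * (\<Sum>a\<in>S. A a * v a)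
     = (\<Sum>a\<in>S. \<Sum>b\<in>S. A a * B b * (u a * v b - u b * v a))"
  by (simp add: sum_product sum_subtractf[symmetric] algebra_simps)

lemma can_bracket1_pullback:
  assumes "f \<in> polyfun n" "g \<in> polyfun n"
    and "\<And>b q p. b \<in> basis n \<Longrightarrow> (\<lambda>t. \<phi> b (t, p)) differentiable at q"
    and "\<And>b q p. b \<in> basis n \<Longrightarrow> (\<lambda>t. \<phi> b (q, t)) differentiable at p"
  shows "can_bracket1 (pullback \<phi> f) (pullback \<phi> g) x
       = (\<Sum>a\<in>basis n. \<Sum>b\<in>basis n.
            gpartial a f (\<lambda>c. \<phi> c x) * gpartial b g (\<lambda>c. \<phi> c x) * can_bracket1 (\<phi> a) (\<phi> b) x)"
  using assms
  by (cases x) (simp add: can_bracket1_def deriv_pullback sum_product_antisym)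

lemma vupd_nth_self [simp]: "vupd q k (q $ k) = q"
  by (simp add: vupd_def vec_eq_iff)

lemma can_bracketN_pullback:
  assumes "f \<in> polyfun n" "g \<in> polyfun n"
    and "\<And>b q p k. b \<in> basis n \<Longrightarrow> (\<lambda>t. \<phi> b (vupd q k t, p)) differentiable at (q $ k)"
    and "\<And>b q p k. b \<in> basis n \<Longrightarrow> (\<lambda>t. \<phi> b (q, vupd p k t)) differentiable at (p $ k)"
  shows "can_bracketN (pullback \<phi> f) (pullback \<phi> g) x
       = (\<Sum>a\<in>basis n. \<Sum>b\<in>basis n.
            gpartial a f (\<lambda>c. \<phi> c x) * gpartial b g (\<lambda>c. \<phi> c x) * can_bracketN (\<phi> a) (\<phi> b) x)"
proof (cases x)
  case (Pair q p)
  let ?f = "\<lambda>a. gpartial a f (\<lambda>c. \<phi> c (q, p))" and ?g = "\<lambda>b. gpartial b g (\<lambda>c. \<phi> c (q, p))"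
  have "can_bracketN (pullback \<phi> f) (pullback \<phi> g) (q, p)
      = (\<Sum>k\<in>UNIV. \<Sum>a\<in>basis n. \<Sum>b\<in>basis n. ?f a * ?g b *
          (deriv (\<lambda>t. \<phi> a (vupd q k t, p)) (q $ k) * deriv (\<lambda>t. \<phi> b (q, vupd p k t)) (p $ k)
         - deriv (\<lambda>t. \<phi> b (vupd q k t, p)) (q $ k) * deriv (\<lambda>t. \<phi> a (q, vupd p k t)) (p $ k)))"
    using assms by (simp add: can_bracketN_def deriv_pullback sum_product_antisym)
  also have "\<dots> = (\<Sum>a\<in>basis n. \<Sum>b\<in>basis n. ?f a * ?g b * can_bracketN (\<phi> a) (\<phi> b) (q, p))"
    by (simp add: can_bracketN_def sum_distrib_left sum.swap[of _ UNIV])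
  finally show ?thesis
    using Pair by simp
qed

lemma sum_unitv: "d \<in> basis n \<Longrightarrow> (\<Sum>c\<in>basis n. unitv d c * g c) = g d"
  by (simp add: unitv_def finite_basis if_distrib if_distribR cong: if_cong)

lemma mem_basis:
  "H \<in> basis n" "Xm \<in> basis n" "Xp \<in> basis n"
  "Ym i \<in> basis n \<longleftrightarrow> Yp i \<in> basis n"
  "Yp i \<in> basis n \<Longrightarrow> Yp j \<in> basis n \<Longrightarrow> i \<le> j \<Longrightarrow> Z i j \<in> basis n"
  by (auto simp: basis_def)

fun dq_real1 :: "(nat \<Rightarrow> real) \<Rightarrow> gen \<Rightarrow> real \<times> real \<Rightarrow> real" where
  "dq_real1 \<alpha> H (q, p) = p"
| "dq_real1 \<alpha> Xm (q, p) = - q"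
| "dq_real1 \<alpha> Xp (q, p) = 0"
| "dq_real1 \<alpha> (Ym i) (q, p) = - \<alpha> i"
| "dq_real1 \<alpha> (Yp i) (q, p) = 0"
| "dq_real1 \<alpha> (Z i j) (q, p) = 0"

fun dp_real1 :: "(nat \<Rightarrow> real) \<Rightarrow> gen \<Rightarrow> real \<times> real \<Rightarrow> real" where
  "dp_real1 \<alpha> H (q, p) = q"
| "dp_real1 \<alpha> Xm (q, p) = 0"
| "dp_real1 \<alpha> Xp (q, p) = p"
| "dp_real1 \<alpha> (Ym i) (q, p) = 0"
| "dp_real1 \<alpha> (Yp i) (q, p) = \<alpha> i"
| "dp_real1 \<alpha> (Z i j) (q, p) = 0"

lemma real1_has_derivative_q:
  "((\<lambda>t. real1 \<alpha> b (t, p)) has_real_derivative dq_real1 \<alpha> b (q, p)) (at q)"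
  by (cases b) (auto intro!: derivative_eq_intros)

lemma real1_has_derivative_p:
  "((\<lambda>t. real1 \<alpha> b (q, t)) has_real_derivative dp_real1 \<alpha> b (q, p)) (at p)"
  by (cases b) (auto intro!: derivative_eq_intros)

lemma real1_bracket_relations:
  assumes "a \<in> basis n" "b \<in> basis n"
  shows "dq_real1 \<alpha> a x * dp_real1 \<alpha> b x - dq_real1 \<alpha> b x * dp_real1 \<alpha> a x
       = (\<Sum>c\<in>basis n. lie a b c * real1 \<alpha> c x)"
  using assms
  by (cases x; cases a; cases b)
     (auto simp: mem_basis sum_unitv sum_negf sum_distrib_left[symmetric]
        power2_eq_square algebra_simps min_def max_def)

lemma can_bracket1_real1:
  "a \<in> basis n \<Longrightarrow> b \<in> basis n \<Longrightarrow>
    can_bracket1 (real1 \<alpha> a) (real1 \<alpha> b) x = (\<Sum>c\<in>basis n. lie a b c * real1 \<alpha> c x)"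
  by (cases x) (simp add: can_bracket1_def real1_has_derivative_q[THEN DERIV_imp_deriv]
      real1_has_derivative_p[THEN DERIV_imp_deriv] real1_bracket_relations)

lemma C_inf_real1_comp:
  assumes "bounded_linear u" "bounded_linear v"
  shows "C_inf (\<lambda>x. real1 \<alpha> b (u x, v x))"
proof -
  have "C_inf u" "C_inf v"
    using assms by (simp_all add: C_inf_bounded_linear)
  then show ?thesis
    by (cases b)
      (auto simp: power2_eq_square intro!: C_inf_mult C_inf_const C_inf_uminus C_inf_divide_const)
qed

lemma C_inf_real1: "C_inf (real1 \<alpha> b)"
  using C_inf_real1_comp[OF bounded_linear_fst bounded_linear_snd] by simp

text \<open>The primitive coproduct: site \<open>k\<close> carries the one degree of freedom realisation with
  constants \<open>\<alpha> i $ k\<close>.\<close>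
lemma realN_eq_sum_real1:
  "realN \<alpha> b (q, p) = (\<Sum>k\<in>UNIV. real1 (\<lambda>i. \<alpha> i $ k) b (q $ k, p $ k))"
  by (cases b) (simp_all add: inner_vec_def sum_divide_distrib sum_negf power2_eq_square)

lemma vupd_eq_add_axis: "vupd q k t = q + (t - q $ k) *\<^sub>R axis k 1"
  by (simp add: vupd_def vec_eq_iff axis_def)

lemma realN_has_derivative_q:
  "((\<lambda>t. realN \<alpha> b (vupd q k t, p)) has_real_derivative dq_real1 (\<lambda>i. \<alpha> i $ k) b (q $ k, p $ k))
    (at (q $ k))"
  unfolding vupd_eq_add_axis
  by (cases b) (auto intro!: derivative_eq_intros
      simp: inner_add_left inner_add_right inner_axis inner_axis' inner_commute)

lemma realN_has_derivative_p:
  "((\<lambda>t. realN \<alpha> b (q, vupd p k t)) has_real_derivative dp_real1 (\<lambda>i. \<alpha> i $ k) b (q $ k, p $ k))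
    (at (p $ k))"
  unfolding vupd_eq_add_axis
  by (cases b) (auto intro!: derivative_eq_intros
      simp: inner_add_left inner_add_right inner_axis inner_axis' inner_commute)

lemma can_bracketN_realN:
  assumes "a \<in> basis n" "b \<in> basis n"
  shows "can_bracketN (realN \<alpha> a) (realN \<alpha> b) x = (\<Sum>c\<in>basis n. lie a b c * realN \<alpha> c x)"
proof (cases x)
  case (Pair q p)
  let ?site = "\<lambda>k. (\<lambda>i. \<alpha> i $ k)" and ?x = "\<lambda>k. (q $ k, p $ k)"
  have "can_bracketN (realN \<alpha> a) (realN \<alpha> b) (q, p)
      = (\<Sum>k\<in>UNIV. \<Sum>c\<in>basis n. lie a b c * real1 (?site k) c (?x k))"
    by (simp add: can_bracketN_def realN_has_derivative_q[THEN DERIV_imp_deriv]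
        realN_has_derivative_p[THEN DERIV_imp_deriv] real1_bracket_relations[OF assms])
  also have "\<dots> = (\<Sum>c\<in>basis n. lie a b c * realN \<alpha> c (q, p))"
    by (simp add: realN_eq_sum_real1 sum_distrib_left sum.swap[of _ UNIV])
  finally show ?thesis
    using Pair by simp
qed

lemma C_inf_realN: "C_inf (realN \<alpha> b)"
proof -
  have "bounded_linear (\<lambda>x. fst x $ k)" "bounded_linear (\<lambda>x. snd x $ k)" for k
    by (auto intro: bounded_linear_compose[OF bounded_linear_vec_nth]
        bounded_linear_fst bounded_linear_snd)
  then have "C_inf (\<lambda>x. \<Sum>k\<in>UNIV. real1 (\<lambda>i. \<alpha> i $ k) b (fst x $ k, snd x $ k))"
    by (intro C_inf_sum C_inf_real1_comp)
  moreover have "realN \<alpha> b = (\<lambda>x. \<Sum>k\<in>UNIV. real1 (\<lambda>i. \<alpha> i $ k) b (fst x $ k, snd x $ k))"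
    by (simp add: fun_eq_iff split_paired_All realN_eq_sum_real1)
  ultimately show ?thesis
    by simp
qed

theorem proposition5p1:
  fixes n :: nat and \<alpha> :: "nat \<Rightarrow> real" and \<alpha>v :: "nat \<Rightarrow> real ^ 'N"
  assumes "n \<ge> 2"
  shows "(\<exists>D. LP_poisson_hom n can_bracket1 (real1 \<alpha>) D)
       \<and> (\<exists>D. LP_poisson_hom n can_bracketN (realN \<alpha>v) D)"
proof (intro conjI exI)
  show "LP_poisson_hom n can_bracket1 (real1 \<alpha>) (pullback (real1 \<alpha>))"
    by (intro LP_poisson_hom_pullback C_inf_real1 can_bracket1_pullback can_bracket1_real1)
      (auto intro: real1_has_derivative_q real1_has_derivative_p simp: real_differentiable_def)
  show "LP_poisson_hom n can_bracketN (realN \<alpha>v) (pullback (realN \<alpha>v))"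
    by (intro LP_poisson_hom_pullback C_inf_realN can_bracketN_pullback can_bracketN_realN)
      (auto intro: realN_has_derivative_q realN_has_derivative_p simp: real_differentiable_def)
qed

end
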